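(* Let $T$ be a tetrahedron satisfying the maximum angle condition with bound $\theta_M<\pi$. Then $T$ has three edges $e_1,e_2,e_3$ (not necessarily sharing a common vertex) such that the matrix $M$ whose columns are the unit direction vectors of these edges satisfies $$|\det(M)|\ge c_m:=\min\{\sqrt3/2,\sin(\theta_M)\}\,\min\{\cos(\theta_M/2),\sin(\theta_M)\}^2,$$ and moreover $$\frac{c_m}{6}|e_1||e_2||e_3|\le|T|\le\frac16|e_1||e_2||e_3|.$$
   Context: A tetrahedron satisfies the maximum angle condition with bound $\theta_M$ if all its dihedral angles and all angles of its triangular faces are at most $\theta_M$. $|e_i|$ is the length of $e_i$, $|T|$ the volume of $T$. *)

theory Defs
  imports "HOL-Analysis.Analysis"
begin

definition vangle :: "real^3 \<Rightarrow> real^3 \<Rightarrow> real" where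
  "vangle u v = arccos ((u \<bullet> v) / (norm u * norm v))"

definition orth_comp :: "real^3 \<Rightarrow> real^3 \<Rightarrow> real^3" where
  "orth_comp w u = w - ((w \<bullet> u) / (u \<bullet> u)) *\<^sub>R u"

definition tetrahedron :: "(nat \<Rightarrow> real^3) \<Rightarrow> bool" where
  "tetrahedron p \<longleftrightarrow> \<not> coplanar {p 0, p 1, p 2, p 3}"

definition face_angle :: "(nat \<Rightarrow> real^3) \<Rightarrow> nat \<Rightarrow> nat \<Rightarrow> nat \<Rightarrow> real" where
  "face_angle p i j k = vangle (p j - p i) (p k - p i)"

text \<open>Dihedral angle along the edge from vertex i to vertex j, between the faces
  {i,j,k} and {i,j,l}: the angle between the components of p k - p i and p l - p i
  orthogonal to the edge.\<close>
definition dihedral_angle :: "(nat \<Rightarrow> real^3) \<Rightarrow> nat \<Rightarrow> nat \<Rightarrow> nat \<Rightarrow> nat \<Rightarrow> real" where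
  "dihedral_angle p i j k l =
     vangle (orth_comp (p k - p i) (p j - p i)) (orth_comp (p l - p i) (p j - p i))"

definition max_angle_condition :: "(nat \<Rightarrow> real^3) \<Rightarrow> real \<Rightarrow> bool" where
  "max_angle_condition p \<theta>M \<longleftrightarrow>
     (\<forall>i<4. \<forall>j<4. \<forall>k<4. distinct [i,j,k] \<longrightarrow> face_angle p i j k \<le> \<theta>M) \<and>
     (\<forall>i<4. \<forall>j<4. \<forall>k<4. \<forall>l<4. distinct [i,j,k,l] \<longrightarrow> dihedral_angle p i j k l \<le> \<theta>M)"

definition is_edge :: "nat \<times> nat \<Rightarrow> bool" where
  "is_edge e \<longleftrightarrow> fst e < snd e \<and> snd e < 4"

definition edge_len :: "(nat \<Rightarrow> real^3) \<Rightarrow> nat \<times> nat \<Rightarrow> real" where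
  "edge_len p e = norm (p (snd e) - p (fst e))"

definition edge_dir :: "(nat \<Rightarrow> real^3) \<Rightarrow> nat \<times> nat \<Rightarrow> real^3" where
  "edge_dir p e = (1 / edge_len p e) *\<^sub>R (p (snd e) - p (fst e))"

definition edge_matrix :: "(nat \<Rightarrow> real^3) \<Rightarrow> nat \<times> nat \<Rightarrow> nat \<times> nat \<Rightarrow> nat \<times> nat \<Rightarrow> real^3^3" where
  "edge_matrix p e1 e2 e3 =
     (\<chi> r c. (if c = 1 then edge_dir p e1 else if c = 2 then edge_dir p e2 else edge_dir p e3) $ r)"

definition tet_volume :: "(nat \<Rightarrow> real^3) \<Rightarrow> real" where
  "tet_volume p = measure lebesgue (convex hull {p 0, p 1, p 2, p 3})"

end

(* Some dihedral angle D is at least pi/3: the cosine of a dihedral angle is minus the inner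
   product of the outward unit normals of its two faces, and |n1 + n2 + n3 + n4|^2 >= 0 rules out
   that all six of these inner products are below -1/2.  In each of the two faces through the
   corresponding edge e the angles sum to pi and are at most thetaM, so at one endpoint of e the
   face angle F satisfies (pi - thetaM)/2 <= F <= thetaM.  Let f and g be the edges from these
   endpoints to the two remaining vertices.  Since e x f and e x g are normal to the two faces,
     |e . (f x g)| = |e| |f| |g| sin D sin F sin G,
   and the left-hand side is 6 |T|.  So |det M| = sin D sin F sin G, which lies between c_m
   and 1. *)

theory Submission
  imports Defs
begin

unbundle cross3_syntax

section \<open>Angles between vectors\<close>

lemma abs_cos_vangle_arg_le_1: "\<bar>(u \<bullet> v) / (norm u * norm v)\<bar> \<le> 1"
  using Cauchy_Schwarz_ineq2[of u v]
  by (cases "u = 0 \<or> v = 0") (auto simp: abs_mult divide_le_eq)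

lemma vangle_bounds: "0 \<le> vangle u v" "vangle u v \<le> pi"
  using abs_cos_vangle_arg_le_1[of u v] unfolding vangle_def abs_le_iff
  by (simp_all add: arccos_lbound arccos_ubound)

lemma cos_vangle: "cos (vangle u v) = (u \<bullet> v) / (norm u * norm v)"
  using abs_cos_vangle_arg_le_1[of u v] unfolding vangle_def abs_le_iff by simp

lemma cos_vangle_sgn: "cos (vangle u v) = sgn u \<bullet> sgn v"
  by (simp add: cos_vangle sgn_div_norm divide_inverse_commute)

lemma sin_vangle_nonneg: "0 \<le> sin (vangle u v)"
  using vangle_bounds by (simp add: sin_ge_zero)

lemma norm_cross3_eq_sin_vangle: "norm (u \<times> v) = norm u * norm v * sin (vangle u v)"
proof (cases "u = 0 \<or> v = 0")
  case True
  then show ?thesis by auto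
next
  case False
  define r where "r = (u \<bullet> v) / (norm u * norm v)"
  have uv: "norm u * norm v > 0" using False by simp
  have "(norm (u \<times> v))\<^sup>2 = (norm u * norm v)\<^sup>2 * (1 - r\<^sup>2)"
    using norm_cross_dot[of u v] uv by (simp add: r_def field_simps)
  then have "norm (u \<times> v) = sqrt ((norm u * norm v)\<^sup>2 * (1 - r\<^sup>2))"
    by (simp add: real_sqrt_unique)
  also have "\<dots> = norm u * norm v * sqrt (1 - r\<^sup>2)"
    using uv by (simp add: real_sqrt_mult)
  finally have "norm (u \<times> v) = norm u * norm v * sqrt (1 - r\<^sup>2)" .
  moreover have "sin (vangle u v) = sqrt (1 - r\<^sup>2)"
    using abs_cos_vangle_arg_le_1[of u v] unfolding vangle_def r_def abs_le_iff
    by (simp add: sin_arccos)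
  ultimately show ?thesis by simp
qed

lemma sin_vangle_uminus_left: "sin (vangle (- u) v) = sin (vangle u v)"
  using norm_cross3_eq_sin_vangle[of u v] norm_cross3_eq_sin_vangle[of "- u" v]
  by (cases "u = 0 \<or> v = 0") (auto simp: sin_vangle_nonneg vangle_def)

lemma vangle_scaleR:
  assumes "c \<noteq> 0"
  shows "vangle (c *\<^sub>R u) (c *\<^sub>R v) = vangle u v"
proof -
  have "sgn (c *\<^sub>R u) \<bullet> sgn (c *\<^sub>R v) = (sgn c * sgn c) * (sgn u \<bullet> sgn v)"
    by (simp add: sgn_scaleR)
  then have "cos (vangle (c *\<^sub>R u) (c *\<^sub>R v)) = cos (vangle u v)"
    using assms by (simp add: cos_vangle_sgn)
  then show ?thesis
    by (rule cos_inj_pi[OF vangle_bounds vangle_bounds])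
qed

lemma sin_ge_min_endpoints:
  assumes "0 \<le> a" "a \<le> x" "x \<le> b" "b \<le> pi"
  shows "min (sin a) (sin b) \<le> sin x"
proof (cases "x \<le> pi / 2")
  case True
  then have "sin a \<le> sin x" using assms by (intro sin_monotone_2pi_le) auto
  then show ?thesis by simp
next
  case False
  then have "sin (pi - b) \<le> sin (pi - x)" using assms by (intro sin_monotone_2pi_le) auto
  then show ?thesis by simp
qed

lemma vangle_triangle_sum:
  fixes a b c :: "real^3"
  assumes "(b - a) \<times> (c - a) \<noteq> 0"
  shows "vangle (b - a) (c - a) + vangle (a - b) (c - b) + vangle (a - c) (b - c) = pi"
proof -
  define u v where "u = b - a" and "v = c - a"
  have vertex_b: "a - b = - u" "c - b = v - u" and vertex_c: "a - c = - v" "b - c = u - v"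
    by (simp_all add: u_def v_def)
  have cross_b: "u \<times> (v - u) = u \<times> v"
    by (simp add: Cross3.right_diff_distrib)
  define A B C where "A = vangle u v" and "B = vangle (- u) (v - u)" and "C = vangle (- v) (u - v)"
  define ru rv rw d N where "ru = norm u" and "rv = norm v" and "rw = norm (v - u)"
    and "d = u \<bullet> v" and "N = norm (u \<times> v)"
  have N_pos: "N > 0" and pos: "ru > 0" "rv > 0" "rw > 0"
    using assms by (auto simp: N_def ru_def rv_def rw_def u_def v_def)
  have NN: "N * N = ru * ru * (rv * rv) - d * d"
    using norm_cross_dot[of u v] by (simp add: N_def ru_def rv_def d_def power2_eq_square algebra_simps)
  have uu: "u \<bullet> u = ru * ru" and vv: "v \<bullet> v = rv * rv"
    by (simp_all add: ru_def rv_def flip: power2_norm_eq_inner power2_eq_square)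
  have cA: "cos A = d / (ru * rv)" and sA: "sin A = N / (ru * rv)"
    using norm_cross3_eq_sin_vangle[of u v] pos
    by (simp_all add: A_def cos_vangle ru_def rv_def d_def N_def)
  have cB: "cos B = (ru * ru - d) / (ru * rw)" and sB: "sin B = N / (ru * rw)"
    using norm_cross3_eq_sin_vangle[of "- u" "v - u"] pos
    by (simp_all add: B_def cos_vangle cross_b inner_diff_right uu ru_def rw_def d_def N_def)
  have cC: "cos C = (rv * rv - d) / (rv * rw)"
    by (simp add: C_def cos_vangle inner_diff_right vv rv_def rw_def d_def norm_minus_commute
        inner_commute)
  have "cos (A + B) = (d * (ru * ru - d) - N * N) / (ru * ru * (rv * rw))"
    unfolding cos_add cA cB sA sB using pos by (simp add: field_simps)
  also have "\<dots> = (ru * ru) * (d - rv * rv) / ((ru * ru) * (rv * rw))"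
    unfolding NN by (simp add: algebra_simps)
  also have "\<dots> = - cos C"
    using pos by (simp add: cC minus_divide_left)
  finally have cos_AB: "cos (A + B) = - cos C" .
  have "sin (A + B) = N * (ru * ru) / ((ru * ru) * (rv * rw))"
    unfolding sin_add cA cB sA sB using pos by (simp add: field_simps)
  then have "sin (A + B) > 0"
    using pos N_pos by simp
  have bounds: "0 \<le> A" "A \<le> pi" "0 \<le> B" "B \<le> pi" "0 \<le> C" "C \<le> pi"
    unfolding A_def B_def C_def by (simp_all add: vangle_bounds)
  have "A + B < pi"
  proof (rule ccontr)
    assume "\<not> A + B < pi"
    then have "0 \<le> sin (A + B - pi)"
      using bounds by (intro sin_ge_zero) auto
    with \<open>sin (A + B) > 0\<close> show False
      by (simp add: sin_diff)
  qed
  have "A + B = pi - C"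
    by (rule cos_inj_pi) (use bounds cos_AB \<open>A + B < pi\<close> in auto)
  then show ?thesis
    unfolding vertex_b vertex_c u_def [symmetric] v_def [symmetric]
    by (simp add: A_def B_def C_def)
qed

lemma sin_base_angle_lower_bound:
  assumes "F1 + F2 + F3 = pi" "0 \<le> F1" "0 \<le> F2" "F1 \<le> \<theta>" "F2 \<le> \<theta>" "F3 \<le> \<theta>" "\<theta> < pi"
  shows "min (cos (\<theta> / 2)) (sin \<theta>) \<le> sin F1 \<or> min (cos (\<theta> / 2)) (sin \<theta>) \<le> sin F2"
proof -
  have cos_half: "cos (\<theta> / 2) = sin ((pi - \<theta>) / 2)"
    by (simp add: cos_sin_eq diff_divide_distrib)
  have "(pi - \<theta>) / 2 \<le> F1 \<or> (pi - \<theta>) / 2 \<le> F2"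
    using assms(1,6) by (cases "(pi - \<theta>) / 2 \<le> F1") auto
  then show ?thesis
    using assms(2-7) sin_ge_min_endpoints[of "(pi - \<theta>) / 2" _ \<theta>] unfolding cos_half by auto
qed

lemma shape_constant_le_sin_product:
  assumes "pi / 3 \<le> D" "D \<le> \<theta>" "\<theta> < pi"
    and "min (cos (\<theta> / 2)) (sin \<theta>) \<le> y" "min (cos (\<theta> / 2)) (sin \<theta>) \<le> z"
  shows "min (sqrt 3 / 2) (sin \<theta>) * (min (cos (\<theta> / 2)) (sin \<theta>))\<^sup>2 \<le> sin D * y * z"
proof -
  define m where "m = min (cos (\<theta> / 2)) (sin \<theta>)"
  have "min (sqrt 3 / 2) (sin \<theta>) \<le> sin D"
    using sin_ge_min_endpoints[of "pi / 3" D \<theta>] assms(1-3) by (simp add: sin_60)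
  moreover have "0 \<le> m"
    using assms(1-3) pi_gt_zero by (auto simp: m_def intro!: sin_ge_zero cos_ge_zero)
  moreover have "0 \<le> sin D"
    using assms(1-3) pi_gt_zero by (intro sin_ge_zero) auto
  ultimately show ?thesis
    unfolding m_def[symmetric] power2_eq_square mult.assoc[symmetric]
    using assms(4,5) by (intro mult_mono) (auto simp: m_def)
qed

section \<open>Cross products, triple products and volume\<close>

lemma inner_cross3_cross3: "(a \<times> b) \<bullet> (c \<times> d) = (a \<bullet> c) * (b \<bullet> d) - (a \<bullet> d) * (b \<bullet> c)"
  by (simp add: cross3_simps)

lemma cross3_diff_shift:
  fixes a b c :: "real^3"
  shows "(b - a) \<times> (c - b) = (b - a) \<times> (c - a)"
  by (simp add: cross3_simps)

lemma cross3_nonzero_if_triple_product_nonzero: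
  fixes u v w :: "real^3"
  assumes "u \<bullet> (v \<times> w) \<noteq> 0"
  shows "u \<times> v \<noteq> 0" "u \<times> w \<noteq> 0"
proof -
  have "u \<bullet> (v \<times> w) = (u \<times> v) \<bullet> w" "u \<bullet> (v \<times> w) = - ((u \<times> w) \<bullet> v)"
    by (simp_all add: cross3_simps)
  then show "u \<times> v \<noteq> 0" "u \<times> w \<noteq> 0"
    using assms by auto
qed

lemma vangle_cross3_orthogonal:
  assumes "e \<noteq> 0" "e \<bullet> u = 0" "e \<bullet> v = 0"
  shows "vangle (e \<times> u) (e \<times> v) = vangle u v"
proof -
  have "norm (e \<times> w) = norm e * norm w" if "e \<bullet> w = 0" for w
  proof (rule power2_eq_imp_eq)
    show "(norm (e \<times> w))\<^sup>2 = (norm e * norm w)\<^sup>2"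
      using norm_cross_dot[of e w] that by simp
  qed simp_all
  moreover have "(e \<times> u) \<bullet> (e \<times> v) = (norm e * norm e) * (u \<bullet> v)"
    using assms by (simp add: inner_cross3_cross3 inner_commute flip: power2_norm_eq_inner power2_eq_square)
  ultimately show ?thesis
    using assms by (simp add: vangle_def)
qed

lemma abs_triple_product_eq_sin_vangle:
  fixes e v w :: "real^3"
  assumes "e \<noteq> 0"
  shows "\<bar>e \<bullet> (v \<times> w)\<bar> = norm e * norm v * norm w *
    (sin (vangle (e \<times> v) (e \<times> w)) * sin (vangle e v) * sin (vangle e w))"
proof -
  have "(e \<times> v) \<times> (e \<times> w) = (e \<bullet> (v \<times> w)) *\<^sub>R e"
    by (simp add: cross3_simps forall_3)
  then have "\<bar>e \<bullet> (v \<times> w)\<bar> * norm e =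
      norm (e \<times> v) * norm (e \<times> w) * sin (vangle (e \<times> v) (e \<times> w))"
    by (metis norm_cross3_eq_sin_vangle norm_scaleR)
  then have "\<bar>e \<bullet> (v \<times> w)\<bar> * norm e = norm e * (norm e * norm v * norm w *
      (sin (vangle (e \<times> v) (e \<times> w)) * sin (vangle e v) * sin (vangle e w)))"
    by (simp add: norm_cross3_eq_sin_vangle ac_simps)
  then show ?thesis
    using assms by simp
qed

lemma det_columns3:
  "det (\<chi> r c. (if c = 1 then u else if c = 2 then v else w) $ r :: real^3^3) = u \<bullet> (v \<times> w)"
  by (simp add: det_3 cross3_def inner_vec_def sum_3 algebra_simps)

lemma rows_vector3: "rows (vector [u, v, w] :: real^3^3) = {u, v, w}"
  unfolding rows_def row_def vec_lambda_eta Setcompr_eq_image full_SetCompr_eq UNIV_3 by simp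

lemma coplanar_insert_0_if_dim_le_2:
  fixes S :: "'a::euclidean_space set"
  assumes "dim S \<le> 2"
  shows "coplanar (insert 0 S)"
proof -
  obtain B where B: "independent B" "S \<subseteq> span B" "card B = dim S"
    by (rule basis_exists)
  then have "finite B" "card B \<le> 2"
    using assms by (simp_all add: independent_imp_finite)
  then consider "card B = 0" | "card B = 1" | "card B = 2"
    by linarith
  then obtain x y where "B \<subseteq> {x, y}"
    using \<open>finite B\<close> by cases (auto simp: card_1_singleton_iff card_2_iff)
  then have "insert 0 S \<subseteq> span {x, y}"
    using B(2) span_mono span_zero by blast
  also have "span {x, y} = affine hull {0, x, y}"
    by (simp add: affine_hull_insert_span_gen)
  finally show ?thesis
    unfolding coplanar_def by blast
qed

lemma triple_product_nonzero_if_not_coplanar: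
  fixes a b c d :: "real^3"
  assumes "\<not> coplanar {a, b, c, d}"
  shows "(b - a) \<bullet> ((c - a) \<times> (d - a)) \<noteq> 0"
proof
  define u v w where "u = b - a" and "v = c - a" and "w = d - a"
  assume "(b - a) \<bullet> ((c - a) \<times> (d - a)) = 0"
  then have "det (vector [u, v, w] :: real^3^3) = 0"
    by (simp add: u_def v_def w_def dot_cross_det)
  then have "dim (rows (vector [u, v, w] :: real^3^3)) < 3"
    by (simp add: det_eq_0_rank row_rank_def)
  then have "dim {u, v, w} \<le> 2"
    by (simp add: rows_vector3)
  then have "coplanar (insert 0 {u, v, w})"
    by (rule coplanar_insert_0_if_dim_le_2)
  moreover have "{a, b, c, d} = (\<lambda>z. a + z) ` insert 0 {u, v, w}"
    by (simp add: u_def v_def w_def)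
  ultimately show False
    using assms coplanar_translation_eq by metis
qed

lemma measure_convex_hull_tetrahedron:
  fixes a b c d :: "real^3"
  assumes "distinct [a, b, c, d]"
  shows "measure lebesgue (convex hull {a, b, c, d}) = \<bar>(b - a) \<bullet> ((c - a) \<times> (d - a))\<bar> / 6"
proof -
  define X where "X = {a, b, c, d}"
  define f where "f = (\<lambda>j::3. if j = 1 then b else if j = 2 then c else d)"
  have "bij_betw f UNIV (X - {a})"
  proof (rule bij_betwI')
    show "f x = f y \<longleftrightarrow> x = y" for x y :: 3
      using assms exhaust_3[of x] exhaust_3[of y] by (auto simp: f_def)
    show "f x \<in> X - {a}" for x :: 3
      using assms exhaust_3[of x] by (auto simp: f_def X_def)
    have "f 1 = b" "f 2 = c" "f 3 = d"
      by (simp_all add: f_def)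
    then show "\<exists>x\<in>UNIV. y = f x" if "y \<in> X - {a}" for y
      using that unfolding X_def by blast
  qed
  moreover have "(\<chi> i j. f j $ i - a $ i) =
      (\<chi> r s. (if s = 1 then b - a else if s = 2 then c - a else d - a) $ r :: real^3^3)"
    by (simp add: vec_eq_iff f_def)
  moreover have "card X = Suc CARD(3)"
    using assms by (simp add: X_def)
  ultimately have "measure lborel (convex hull X) = \<bar>(b - a) \<bullet> ((c - a) \<times> (d - a))\<bar> / fact 3"
    using content_simplex[of X a f] by (simp add: X_def det_columns3)
  moreover have "measure lebesgue (convex hull X) = measure lborel (convex hull X)"
    using finite_imp_compact_convex_hull[of X]
    by (intro measure_completion) (auto simp: X_def dest: compact_imp_closed)
  ultimately show ?thesis
    by (simp add: X_def fact_numeral)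
qed

lemma inner_sum_unit_vectors4:
  fixes n1 n2 n3 n4 :: "'a::real_inner"
  assumes "norm n1 = 1" "norm n2 = 1" "norm n3 = 1" "norm n4 = 1"
  shows "- 2 \<le> n1 \<bullet> n2 + n1 \<bullet> n3 + n1 \<bullet> n4 + n2 \<bullet> n3 + n2 \<bullet> n4 + n3 \<bullet> n4"
proof -
  have "0 \<le> (n1 + n2 + n3 + n4) \<bullet> (n1 + n2 + n3 + n4)"
    by simp
  also have "\<dots> = 4 + 2 * (n1 \<bullet> n2 + n1 \<bullet> n3 + n1 \<bullet> n4 + n2 \<bullet> n3 + n2 \<bullet> n4 + n3 \<bullet> n4)"
    using assms by (simp add: inner_add_left inner_add_right inner_commute norm_eq_1)
  finally show ?thesis
    by simp
qed

section \<open>Face and dihedral angles of a tetrahedron\<close>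

lemma orth_comp_eq_cross3:
  assumes "e \<noteq> 0"
  shows "orth_comp w e = (- 1 / (e \<bullet> e)) *\<^sub>R (e \<times> (e \<times> w))"
proof -
  have triple: "e \<times> (e \<times> w) = (e \<bullet> w) *\<^sub>R e - (e \<bullet> e) *\<^sub>R w"
    by (simp add: cross3_simps forall_3)
  show ?thesis
    using assms unfolding orth_comp_def triple by (simp add: algebra_simps inner_commute)
qed

lemma dihedral_angle_eq_vangle_cross3:
  assumes "p j \<noteq> p i"
  shows "dihedral_angle p i j k l =
    vangle ((p j - p i) \<times> (p k - p i)) ((p j - p i) \<times> (p l - p i))"
proof -
  define e where "e = p j - p i"
  have "e \<noteq> 0" using assms by (simp add: e_def)
  then have "dihedral_angle p i j k l =
      vangle (e \<times> (e \<times> (p k - p i))) (e \<times> (e \<times> (p l - p i)))"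
    unfolding dihedral_angle_def e_def[symmetric] orth_comp_eq_cross3[OF \<open>e \<noteq> 0\<close>]
    by (intro vangle_scaleR) simp
  also have "\<dots> = vangle (e \<times> (p k - p i)) (e \<times> (p l - p i))"
    using \<open>e \<noteq> 0\<close> by (simp add: vangle_cross3_orthogonal dot_cross_self)
  finally show ?thesis by (simp add: e_def)
qed

lemma cos_dihedral_angle:
  "p j \<noteq> p i \<Longrightarrow> cos (dihedral_angle p i j k l) =
    sgn ((p j - p i) \<times> (p k - p i)) \<bullet> sgn ((p j - p i) \<times> (p l - p i))"
  by (simp add: dihedral_angle_eq_vangle_cross3 cos_vangle_sgn)

lemma face_vertex_sin_bound:
  assumes mac: "max_angle_condition p \<theta>" and "\<theta> < pi"
    and idx: "i < 4" "j < 4" "k < 4" "distinct [i, j, k]"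
    and nondeg: "(p j - p i) \<times> (p k - p i) \<noteq> 0"
  shows "\<exists>a\<in>{i, j}. min (cos (\<theta> / 2)) (sin \<theta>) \<le> sin (vangle (p j - p i) (p k - p a))"
proof -
  have "face_angle p i j k + face_angle p j i k + face_angle p k i j = pi"
    using vangle_triangle_sum[OF nondeg] by (simp add: face_angle_def)
  moreover have "face_angle p i j k \<le> \<theta>" "face_angle p j i k \<le> \<theta>" "face_angle p k i j \<le> \<theta>"
    using mac idx unfolding max_angle_condition_def by auto
  moreover have "sin (face_angle p j i k) = sin (vangle (p j - p i) (p k - p j))"
    using sin_vangle_uminus_left[of "p j - p i" "p k - p j"] by (simp add: face_angle_def)
  ultimately show ?thesis
    using idx sin_base_angle_lower_bound[OF _ _ _ _ _ _ \<open>\<theta> < pi\<close>, of "face_angle p i j k"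
        "face_angle p j i k" "face_angle p k i j"]
    by (auto simp: face_angle_def vangle_bounds insert_commute)
qed

lemma tetrahedron_inj_on: "tetrahedron p \<Longrightarrow> inj_on p {..<4}"
proof -
  assume "tetrahedron p"
  have vertices: "p ` {..<4} = {p 0, p 1, p 2, p 3}"
    by (auto simp: numeral_eq_Suc less_Suc_eq)
  then have "\<not> card (p ` {..<4}) \<le> 3"
    using \<open>tetrahedron p\<close> coplanar_small[of "p ` {..<4}"] by (auto simp: tetrahedron_def)
  moreover have "card (p ` {..<4}) \<le> card {..<4::nat}"
    by (rule card_image_le) simp
  ultimately show ?thesis
    by (intro eq_card_imp_inj_on) auto
qed

lemma vertex_set_eq:
  fixes i j k l :: nat
  assumes "i < 4" "j < 4" "k < 4" "l < 4" "distinct [i, j, k, l]"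
  shows "{p i, p j, p k, p l} = {p 0, p 1, p 2, p 3}"
proof -
  have "{i, j, k, l} = {..<4}"
    using assms by (intro card_subset_eq) auto
  then have "p ` {i, j, k, l} = p ` {..<4}"
    by simp
  then show ?thesis
    by (simp add: numeral_eq_Suc lessThan_Suc insert_commute)
qed

lemma tet_volume_eq_triple_product:
  assumes "tetrahedron p" "i < 4" "j < 4" "k < 4" "l < 4" "distinct [i, j, k, l]"
  shows "tet_volume p = \<bar>(p j - p i) \<bullet> ((p k - p i) \<times> (p l - p i))\<bar> / 6"
proof -
  have "distinct [p i, p j, p k, p l]"
    using inj_on_contraD[OF tetrahedron_inj_on[OF assms(1)]] assms(2-6) by auto
  then have "measure lebesgue (convex hull {p i, p j, p k, p l}) =
      \<bar>(p j - p i) \<bullet> ((p k - p i) \<times> (p l - p i))\<bar> / 6"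
    by (rule measure_convex_hull_tetrahedron)
  then show ?thesis
    by (simp add: tet_volume_def vertex_set_eq[OF assms(2-6)])
qed

lemma tetrahedron_triple_product_nonzero:
  assumes "tetrahedron p" "i < 4" "j < 4" "k < 4" "l < 4" "distinct [i, j, k, l]"
  shows "(p j - p i) \<bullet> ((p k - p i) \<times> (p l - p i)) \<noteq> 0"
  using assms triple_product_nonzero_if_not_coplanar vertex_set_eq[OF assms(2-6), of p]
  by (simp add: tetrahedron_def)

lemma exists_dihedral_angle_ge_pi_div_3:
  assumes tet: "tetrahedron p"
  shows "\<exists>i j k l. i < 4 \<and> j < 4 \<and> k < 4 \<and> l < 4 \<and> distinct [i, j, k, l] \<and>
    pi / 3 \<le> dihedral_angle p i j k l"
proof (rule ccontr)
  assume small: "\<not> ?thesis"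
  have cos_gt: "1 / 2 < sgn ((p j - p i) \<times> (p k - p i)) \<bullet> sgn ((p j - p i) \<times> (p l - p i))"
    if "i < 4" "j < 4" "k < 4" "l < 4" "distinct [i, j, k, l]" for i j k l
  proof -
    have "\<not> pi / 3 \<le> dihedral_angle p i j k l"
      using small that by blast
    then have "dihedral_angle p i j k l < pi / 3"
      by simp
    then have "cos (pi / 3) < cos (dihedral_angle p i j k l)"
      by (subst cos_mono_less_eq) (auto simp: dihedral_angle_def vangle_bounds)
    moreover have "p j \<noteq> p i"
      using that inj_on_contraD[OF tetrahedron_inj_on[OF tet], of j i] by auto
    ultimately show ?thesis
      by (simp add: cos_dihedral_angle cos_60)
  qed
  define a b c where "a = p 1 - p 0" and "b = p 2 - p 0" and "c = p 3 - p 0"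
  define A B C W where "A = a \<times> b" and "B = b \<times> c" and "C = c \<times> a" and "W = A + B + C"
  have "a \<bullet> (b \<times> c) \<noteq> 0"
    using tetrahedron_triple_product_nonzero[OF tet, of 0 1 2 3] by (simp add: a_def b_def c_def)
  moreover have "A \<bullet> c = a \<bullet> (b \<times> c)" "B \<bullet> a = a \<bullet> (b \<times> c)" "C \<bullet> b = a \<bullet> (b \<times> c)"
    "W \<bullet> a = a \<bullet> (b \<times> c)"
    by (simp_all add: A_def B_def C_def W_def cross3_simps)
  ultimately have unit: "norm (sgn A) = 1" "norm (sgn B) = 1" "norm (sgn C) = 1" "norm (- sgn W) = 1"
    by (auto simp: norm_sgn)
  have "(p 1 - p 0) \<times> (p 2 - p 0) = A" "(p 1 - p 0) \<times> (p 3 - p 0) = - C"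
    "(p 2 - p 0) \<times> (p 1 - p 0) = - A" "(p 2 - p 0) \<times> (p 3 - p 0) = B"
    "(p 3 - p 0) \<times> (p 1 - p 0) = C" "(p 3 - p 0) \<times> (p 2 - p 0) = - B"
    "(p 2 - p 1) \<times> (p 0 - p 1) = A" "(p 2 - p 1) \<times> (p 3 - p 1) = W"
    "(p 3 - p 1) \<times> (p 0 - p 1) = - C" "(p 3 - p 1) \<times> (p 2 - p 1) = - W"
    "(p 3 - p 2) \<times> (p 0 - p 2) = B" "(p 3 - p 2) \<times> (p 1 - p 2) = W"
    by (simp_all add: A_def B_def C_def W_def a_def b_def c_def cross3_simps)
  \<comment> \<open>Up to a common sign, sgn A, sgn B, sgn C and - sgn W are the outward unit normals of the
    faces, and the cosine of each dihedral angle is minus the inner product of the normals of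
    its two faces.\<close>
  then have "sgn A \<bullet> sgn B < - 1 / 2" "sgn A \<bullet> sgn C < - 1 / 2" "sgn A \<bullet> - sgn W < - 1 / 2"
    "sgn B \<bullet> sgn C < - 1 / 2" "sgn B \<bullet> - sgn W < - 1 / 2" "sgn C \<bullet> - sgn W < - 1 / 2"
    using cos_gt[of 0 2 1 3] cos_gt[of 0 1 2 3] cos_gt[of 1 2 0 3]
      cos_gt[of 0 3 1 2] cos_gt[of 2 3 0 1] cos_gt[of 1 3 0 2]
    by (simp_all add: sgn_minus inner_commute)
  then show False
    using inner_sum_unit_vectors4[OF unit] by linarith
qed

definition edge_between :: "nat \<Rightarrow> nat \<Rightarrow> nat * nat" where
  "edge_between a b = (min a b, max a b)"

lemma is_edge_edge_between: "a \<noteq> b \<Longrightarrow> a < 4 \<Longrightarrow> b < 4 \<Longrightarrow> is_edge (edge_between a b)"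
  by (auto simp: is_edge_def edge_between_def min_def max_def)

lemma edge_between_eq_iff: "edge_between a b = edge_between c d \<longleftrightarrow> {a, b} = {c, d}"
  by (auto simp: edge_between_def min_def max_def doubleton_eq_iff)

lemma edge_len_edge_between: "edge_len p (edge_between a b) = norm (p b - p a)"
  by (auto simp: edge_len_def edge_between_def min_def max_def norm_minus_commute)

lemma edge_dir_edge_between:
  "edge_dir p (edge_between a b) = ((if a \<le> b then 1 else - 1) / norm (p b - p a)) *\<^sub>R (p b - p a)"
  by (auto simp: edge_dir_def edge_len_def edge_between_def min_def max_def norm_minus_commute
      simp flip: scaleR_minus_right)

lemma abs_det_edge_matrix_edge_between:
  "\<bar>det (edge_matrix p (edge_between a1 b1) (edge_between a2 b2) (edge_between a3 b3))\<bar> *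
     (edge_len p (edge_between a1 b1) * edge_len p (edge_between a2 b2) * edge_len p (edge_between a3 b3)) =
   \<bar>(p b1 - p a1) \<bullet> ((p b2 - p a2) \<times> (p b3 - p a3))\<bar>"
proof (cases "p b1 = p a1 \<or> p b2 = p a2 \<or> p b3 = p a3")
  case True
  \<comment> \<open>a degenerate edge has direction 0 (division by zero), so both sides vanish\<close>
  then show ?thesis by (auto simp: edge_len_edge_between)
next
  case False
  then show ?thesis
    unfolding edge_matrix_def det_columns3 edge_dir_edge_between edge_len_edge_between
    by (simp add: cross_mult_left cross_mult_right abs_mult)
qed

lemma triple_product_edge_shift:
  assumes "a \<in> {i, j}" "b \<in> {i, j}"
  shows "(p j - p i) \<bullet> ((p k - p a) \<times> (p l - p b)) =
    (p j - p i) \<bullet> ((p k - p i) \<times> (p l - p i))"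
  using assms by (auto simp: cross3_simps)

lemma edges_at_edge:
  assumes "i < 4" "j < 4" "k < 4" "l < 4" "distinct [i, j, k, l]" "a \<in> {i, j}" "b \<in> {i, j}"
  shows "is_edge (edge_between i j)" "is_edge (edge_between a k)" "is_edge (edge_between b l)"
    "distinct [edge_between i j, edge_between a k, edge_between b l]"
  using assms by (auto simp: is_edge_edge_between edge_between_eq_iff doubleton_eq_iff)

lemma edge_matrix_at_edge:
  assumes tet: "tetrahedron p" and idx: "i < 4" "j < 4" "k < 4" "l < 4" "distinct [i, j, k, l]"
    and ab: "a \<in> {i, j}" "b \<in> {i, j}"
  defines "\<delta> \<equiv> sin (dihedral_angle p i j k l) * sin (vangle (p j - p i) (p k - p a)) *
      sin (vangle (p j - p i) (p l - p b))"
    and "L \<equiv> edge_len p (edge_between i j) * edge_len p (edge_between a k) *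
      edge_len p (edge_between b l)"
  shows "\<bar>det (edge_matrix p (edge_between i j) (edge_between a k) (edge_between b l))\<bar> = \<delta>"
    and "tet_volume p = \<delta> * L / 6"
proof -
  have distinct_vertices: "p x \<noteq> p y" if "x \<in> {i, j, k, l}" "y \<in> {i, j, k, l}" "x \<noteq> y" for x y
    using that idx inj_on_contraD[OF tetrahedron_inj_on[OF tet], of x y] by auto
  have L_eq: "L = norm (p j - p i) * norm (p k - p a) * norm (p l - p b)"
    by (simp add: L_def edge_len_edge_between)
  have "L > 0"
    unfolding L_eq using ab idx distinct_vertices by auto
  have cross: "(p j - p i) \<times> (p k - p a) = (p j - p i) \<times> (p k - p i)"
    "(p j - p i) \<times> (p l - p b) = (p j - p i) \<times> (p l - p i)"
    using ab cross3_diff_shift[where a = "p i" and b = "p j"] by auto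
  have triple: "\<bar>(p j - p i) \<bullet> ((p k - p a) \<times> (p l - p b))\<bar> = L * \<delta>"
    using abs_triple_product_eq_sin_vangle[of "p j - p i" "p k - p a" "p l - p b"] idx
      dihedral_angle_eq_vangle_cross3[of p j i k l] distinct_vertices[of j i]
    unfolding L_eq \<delta>_def cross by (simp add: ac_simps)
  then have "L * \<bar>det (edge_matrix p (edge_between i j) (edge_between a k) (edge_between b l))\<bar> = L * \<delta>"
    using abs_det_edge_matrix_edge_between[of p i j a k b l] by (simp add: L_def mult.commute)
  then show "\<bar>det (edge_matrix p (edge_between i j) (edge_between a k) (edge_between b l))\<bar> = \<delta>"
    using \<open>L > 0\<close> by simp
  show "tet_volume p = \<delta> * L / 6"
    using tet_volume_eq_triple_product[OF tet idx] triple triple_product_edge_shift[OF ab]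
    by simp
qed

theorem lemmaC2:
  fixes p :: "nat \<Rightarrow> real^3" and \<theta>M :: real
  assumes "tetrahedron p"
    and "max_angle_condition p \<theta>M"
    and "\<theta>M < pi"
  shows "\<exists>e1 e2 e3. is_edge e1 \<and> is_edge e2 \<and> is_edge e3 \<and> distinct [e1, e2, e3] \<and>
     (let cm = min (sqrt 3 / 2) (sin \<theta>M) * (min (cos (\<theta>M / 2)) (sin \<theta>M))\<^sup>2 in
       \<bar>det (edge_matrix p e1 e2 e3)\<bar> \<ge> cm \<and>
       cm / 6 * (edge_len p e1 * edge_len p e2 * edge_len p e3) \<le> tet_volume p \<and>
       tet_volume p \<le> 1 / 6 * (edge_len p e1 * edge_len p e2 * edge_len p e3))"
proof -
  obtain i j k l where idx: "i < 4" "j < 4" "k < 4" "l < 4" "distinct [i, j, k, l]"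
    and big: "pi / 3 \<le> dihedral_angle p i j k l"
    using exists_dihedral_angle_ge_pi_div_3[OF assms(1)] by blast
  note faces = cross3_nonzero_if_triple_product_nonzero[OF
      tetrahedron_triple_product_nonzero[OF assms(1) idx]]
  obtain a where a: "a \<in> {i, j}"
    "min (cos (\<theta>M / 2)) (sin \<theta>M) \<le> sin (vangle (p j - p i) (p k - p a))"
    using face_vertex_sin_bound[OF assms(2,3) _ _ _ _ faces(1)] idx by auto
  obtain b where b: "b \<in> {i, j}"
    "min (cos (\<theta>M / 2)) (sin \<theta>M) \<le> sin (vangle (p j - p i) (p l - p b))"
    using face_vertex_sin_bound[OF assms(2,3) _ _ _ _ faces(2)] idx by auto
  define \<delta> where "\<delta> = sin (dihedral_angle p i j k l) * sin (vangle (p j - p i) (p k - p a)) *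
      sin (vangle (p j - p i) (p l - p b))"
  define L where "L = edge_len p (edge_between i j) * edge_len p (edge_between a k) *
      edge_len p (edge_between b l)"
  note det_vol = edge_matrix_at_edge[OF assms(1) idx a(1) b(1), folded \<delta>_def L_def]
  have "dihedral_angle p i j k l \<le> \<theta>M"
    using assms(2) idx unfolding max_angle_condition_def by blast
  with big have lower: "min (sqrt 3 / 2) (sin \<theta>M) * (min (cos (\<theta>M / 2)) (sin \<theta>M))\<^sup>2 \<le> \<delta>"
    unfolding \<delta>_def using assms(3) a(2) b(2) by (rule shape_constant_le_sin_product)
  have "\<delta> \<le> 1"
    unfolding \<delta>_def by (intro mult_le_one) (auto simp: sin_vangle_nonneg dihedral_angle_def)
  have "0 \<le> L"
    by (simp add: L_def edge_len_def)
  have "min (sqrt 3 / 2) (sin \<theta>M) * (min (cos (\<theta>M / 2)) (sin \<theta>M))\<^sup>2 / 6 * L \<le> tet_volume p"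
    "tet_volume p \<le> 1 / 6 * L"
    using mult_right_mono[OF lower \<open>0 \<le> L\<close>] mult_right_mono[OF \<open>\<delta> \<le> 1\<close> \<open>0 \<le> L\<close>]
    by (simp_all add: det_vol(2))
  moreover note edges_at_edge[OF idx a(1) b(1)]
  ultimately show ?thesis
    using lower det_vol(1) unfolding Let_def L_def by blast
qed

end
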